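(* Let PS1 and PS2 be two pure strategies (transition matrices $P_1$, $P_2$ on the finite population set $\mathcal{S}$, as described in the context), where the expected hitting time $m_{PS1}(X)$ of PS1 is finite for every $X\in\mathcal{S}$. Then the following are equivalent: (i) PS2 is complementary to PS1, i.e. there exists $X\in\mathcal{S}_{\mathrm{non}}$ with $\Delta_{PS1}(X)<\Delta_{PS2}(X)$; (ii) there exists a mixed strategy MS derived from PS1 and PS2 such that $m_{MS}(X)\le m_{PS1}(X)$ for every initial population $X\in\mathcal{S}$ and $m_{MS}(X)<m_{PS1}(X)$ for some initial population $X\in\mathcal{S}$. Furthermore, (i) is also equivalent to: (iii) there exists a mixed strategy MS derived from PS1 and PS2 such that the expected runtime of MS is no more than that of PS1 for every initial population $X$, and strictly less than that of PS1 for some initial population $X$.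
   Context: A fitness function $f$ on a finite set is to be maximised; its optimal solutions are its maximisers. A metaheuristic generates a sequence of populations $\Phi_0,\Phi_1,\Phi_2,\dots$ (a population is a finite collection of candidate solutions). Let $\mathcal{S}$ be the finite set of all populations, $\mathcal{S}_{\mathrm{opt}}\subseteq\mathcal{S}$ the populations containing at least one optimal solution, and $\mathcal{S}_{\mathrm{non}}=\mathcal{S}\setminus\mathcal{S}_{\mathrm{opt}}$. The sequence is modelled as a time-homogeneous Markov chain on $\mathcal{S}$ with transition probabilities $P(X,Y)=\Pr(\Phi_{t+1}=Y\mid\Phi_t=X)$, in which every state of $\mathcal{S}_{\mathrm{opt}}$ is absorbing. The expected hitting time $m(X)\in[0,\infty]$ is the expected number of generations until the chain first enters $\mathcal{S}_{\mathrm{opt}}$ when $\Phi_0=X$ (so $m(X)=0$ for $X\in\mathcal{S}_{\mathrm{opt}}$). Each generation uses the same fixed number of fitness evaluations (the same for all algorithms compared), and the expected runtime (expected total number of fitness evaluations until an optimal solution is found) equals the expected hitting time times this number. A pure strategy is a transition matrix (independent of $t$) of this kind. Let PS1 and PS2 be pure strategies with transition matrices $P_1,P_2$ on the same $\mathcal{S}$ (with $\mathcal{S}_{\mathrm{opt}}$ absorbing for both), and expected hitting times $m_{PS1},m_{PS2}$. A mixed strategy MS derived from PS1 and PS2 assigns to each population $X$ probabilities $P_X(PS1)\in[0,1]$ and $P_X(PS2)=1-P_X(PS1)$; when the current population is $X$, PS1 is applied with probability $P_X(PS1)$ and PS2 otherwise, so MS has transition matrix $P_{MS}(X,Y)=P_X(PS1)P_1(X,Y)+P_X(PS2)P_2(X,Y)$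 and expected hitting time $m_{MS}$. With the distance function $d(X)=m_{PS1}(X)$, the drifts are defined for $X\in\mathcal{S}_{\mathrm{non}}$ by $\Delta_{PS1}(X)=d(X)-\sum_{Y\in\mathcal{S}_{\mathrm{non}}}P_1(X,Y)d(Y)$ and $\Delta_{PS2}(X)=d(X)-\sum_{Y\in\mathcal{S}_{\mathrm{non}}}P_2(X,Y)d(Y)$. *)

theory Defs
  imports "HOL-Analysis.Analysis" "HOL-Library.Multiset" "HOL-Library.Extended_Nonnegative_Real"
begin

definition S_opt :: "'x multiset set \<Rightarrow> ('x::finite \<Rightarrow> real) \<Rightarrow> 'x multiset set" where
  "S_opt S f = {X \<in> S. \<exists>x \<in># X. \<forall>y. f y \<le> f x}"

definition S_non :: "'x multiset set \<Rightarrow> ('x::finite \<Rightarrow> real) \<Rightarrow> 'x multiset set" where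
  "S_non S f = S - S_opt S f"

definition pure_strategy ::
  "'x multiset set \<Rightarrow> ('x::finite \<Rightarrow> real) \<Rightarrow> ('x multiset \<Rightarrow> 'x multiset \<Rightarrow> real) \<Rightarrow> bool" where
  "pure_strategy S f P \<longleftrightarrow>
     (\<forall>X\<in>S. \<forall>Y\<in>S. 0 \<le> P X Y) \<and>
     (\<forall>X\<in>S. (\<Sum>Y\<in>S. P X Y) = 1) \<and>
     (\<forall>X\<in>S_opt S f. P X X = 1)"

text \<open>surv S f P t X = Pr(Phi_0, ..., Phi_t all lie in S_non | Phi_0 = X), i.e. Pr(T > t)
  where T is the first hitting time of S_opt.\<close>
fun surv ::
  "'x multiset set \<Rightarrow> ('x::finite \<Rightarrow> real) \<Rightarrow> ('x multiset \<Rightarrow> 'x multiset \<Rightarrow> real)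
   \<Rightarrow> nat \<Rightarrow> 'x multiset \<Rightarrow> real" where
  "surv S f P 0 X = (if X \<in> S_non S f then 1 else 0)"
| "surv S f P (Suc t) X =
     (if X \<in> S_non S f then (\<Sum>Y\<in>S_non S f. P X Y * surv S f P t Y) else 0)"

text \<open>Expected hitting time m(X) = E[T] = sum over t of Pr(T > t), a value in [0, infinity].\<close>
definition hit_time ::
  "'x multiset set \<Rightarrow> ('x::finite \<Rightarrow> real) \<Rightarrow> ('x multiset \<Rightarrow> 'x multiset \<Rightarrow> real)
   \<Rightarrow> 'x multiset \<Rightarrow> ennreal" where
  "hit_time S f P X = (\<Sum>t. ennreal (surv S f P t X))"

text \<open>Expected runtime: expected hitting time times the number N of fitness
  evaluations used per generation.\<close>
definition runtime ::
  "nat \<Rightarrow> 'x multiset set \<Rightarrow> ('x::finite \<Rightarrow> real) \<Rightarrow> ('x multiset \<Rightarrow> 'x multiset \<Rightarrow> real)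
   \<Rightarrow> 'x multiset \<Rightarrow> ennreal" where
  "runtime N S f P X = of_nat N * hit_time S f P X"

definition mixed ::
  "('x multiset \<Rightarrow> real) \<Rightarrow> ('x multiset \<Rightarrow> 'x multiset \<Rightarrow> real)
   \<Rightarrow> ('x multiset \<Rightarrow> 'x multiset \<Rightarrow> real) \<Rightarrow> 'x multiset \<Rightarrow> 'x multiset \<Rightarrow> real" where
  "mixed q P1 P2 X Y = q X * P1 X Y + (1 - q X) * P2 X Y"

text \<open>Drift of strategy P w.r.t. the distance d(X) = m_PS1(X) (assumed finite).\<close>
definition drift ::
  "'x multiset set \<Rightarrow> ('x::finite \<Rightarrow> real) \<Rightarrow> ('x multiset \<Rightarrow> 'x multiset \<Rightarrow> real)
   \<Rightarrow> ('x multiset \<Rightarrow> 'x multiset \<Rightarrow> real) \<Rightarrow> 'x multiset \<Rightarrow> real" where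
  "drift S f P1 P X = enn2real (hit_time S f P1 X)
     - (\<Sum>Y\<in>S_non S f. P X Y * enn2real (hit_time S f P1 Y))"

end

theory Submission
  imports Defs
begin

text \<open>Write \<open>m\<close> for the (finite) hitting time of PS1. Its drift with respect to itself is 1 on
  \<open>S_non\<close>, so PS2 is complementary iff \<open>1 + P2 m < m\<close> somewhere. If so, using PS2 exactly at
  such a population makes \<open>m\<close> a supersolution of the hitting-time equation of the mixture, which
  bounds its hitting time by \<open>m\<close>, strictly at that population. If not, \<open>m\<close> is a subsolution for
  every mixture; the difference between \<open>m\<close> and a finite hitting time of the mixture is then
  subharmonic, hence dominated by a multiple of the survival probabilities, which tend to 0,
  so no mixture improves on PS1 anywhere.\<close>

lemma S_non_subset: "S_non S f \<subseteq> S"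
  by (auto simp: S_non_def)

lemma surv_nonneg:
  assumes "\<forall>X\<in>S. \<forall>Y\<in>S. 0 \<le> M X Y"
  shows "0 \<le> surv S f M t X"
proof (induction t arbitrary: X)
  case 0
  show ?case by simp
next
  case (Suc t)
  show ?case
    using assms Suc S_non_subset[of S f] by (auto intro!: sum_nonneg mult_nonneg_nonneg)
qed

lemma surv_eq_0: "X \<notin> S_non S f \<Longrightarrow> surv S f M t X = 0"
  by (cases t) auto

lemma hit_time_eq_0: "X \<notin> S_non S f \<Longrightarrow> hit_time S f M X = 0"
  by (simp add: hit_time_def surv_eq_0)

lemma sum_ennreal_mult:
  assumes "\<And>Y. Y \<in> A \<Longrightarrow> 0 \<le> a Y" and "\<And>Y. Y \<in> A \<Longrightarrow> 0 \<le> v Y"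
  shows "(\<Sum>Y\<in>A. ennreal (a Y) * ennreal (v Y)) = ennreal (\<Sum>Y\<in>A. a Y * v Y)"
proof -
  have "(\<Sum>Y\<in>A. ennreal (a Y) * ennreal (v Y)) = (\<Sum>Y\<in>A. ennreal (a Y * v Y))"
    using assms by (intro sum.cong refl ennreal_mult[symmetric]) auto
  also have "\<dots> = ennreal (\<Sum>Y\<in>A. a Y * v Y)"
    using assms by (intro sum_ennreal) auto
  finally show ?thesis .
qed

lemma one_plus_sum_ennreal_mult:
  assumes "\<And>Y. Y \<in> A \<Longrightarrow> 0 \<le> a Y" and "\<And>Y. Y \<in> A \<Longrightarrow> 0 \<le> v Y"
  shows "1 + (\<Sum>Y\<in>A. ennreal (a Y) * ennreal (v Y)) = ennreal (1 + (\<Sum>Y\<in>A. a Y * v Y))"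
  using assms by (simp add: sum_ennreal_mult ennreal_plus sum_nonneg)

lemma ennreal_surv_Suc:
  assumes nonneg: "\<forall>X\<in>S. \<forall>Y\<in>S. 0 \<le> M X Y" and X: "X \<in> S_non S f"
  shows "ennreal (surv S f M (Suc t) X) =
    (\<Sum>Y\<in>S_non S f. ennreal (M X Y) * ennreal (surv S f M t Y))"
  using nonneg X S_non_subset[of S f] surv_nonneg[OF nonneg]
  by (subst sum_ennreal_mult) auto

lemma hit_time_step:
  assumes nonneg: "\<forall>X\<in>S. \<forall>Y\<in>S. 0 \<le> M X Y" and X: "X \<in> S_non S f"
  shows "hit_time S f M X = 1 + (\<Sum>Y\<in>S_non S f. ennreal (M X Y) * hit_time S f M Y)"
proof -
  let ?g = "\<lambda>t. ennreal (surv S f M t X)"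
  have "hit_time S f M X = (\<Sum>t. ?g (Suc t)) + ?g 0"
    unfolding hit_time_def using suminf_offset[of ?g 1] by simp
  also have "(\<Sum>t. ?g (Suc t))
      = (\<Sum>t. \<Sum>Y\<in>S_non S f. ennreal (M X Y) * ennreal (surv S f M t Y))"
    using ennreal_surv_Suc[OF nonneg X] by simp
  also have "\<dots> = (\<Sum>Y\<in>S_non S f. \<Sum>t. ennreal (M X Y) * ennreal (surv S f M t Y))"
    by (rule suminf_sum) simp
  also have "\<dots> = (\<Sum>Y\<in>S_non S f. ennreal (M X Y) * hit_time S f M Y)"
    by (simp add: hit_time_def)
  finally show ?thesis
    using X by (simp add: add.commute)
qed

lemma hit_time_le_supersolution:
  fixes d :: "'x::finite multiset \<Rightarrow> ennreal"
  assumes nonneg: "\<forall>X\<in>S. \<forall>Y\<in>S. 0 \<le> M X Y"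
    and super: "\<forall>X\<in>S_non S f. 1 + (\<Sum>Y\<in>S_non S f. ennreal (M X Y) * d Y) \<le> d X"
    and X: "X \<in> S_non S f"
  shows "hit_time S f M X \<le> d X"
proof -
  have "\<forall>X\<in>S_non S f. (\<Sum>t<n. ennreal (surv S f M t X)) \<le> d X" for n
  proof (induction n)
    case 0
    show ?case by simp
  next
    case (Suc n)
    show ?case
    proof
      fix X assume X: "X \<in> S_non S f"
      have "(\<Sum>t<Suc n. ennreal (surv S f M t X))
          = ennreal (surv S f M 0 X) + (\<Sum>t<n. ennreal (surv S f M (Suc t) X))"
        by (rule sum.lessThan_Suc_shift)
      also have "\<dots> = 1 + (\<Sum>t<n. \<Sum>Y\<in>S_non S f. ennreal (M X Y) * ennreal (surv S f M t Y))"
        using X ennreal_surv_Suc[OF nonneg X] by simp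
      also have "\<dots> = 1 + (\<Sum>Y\<in>S_non S f. ennreal (M X Y) * (\<Sum>t<n. ennreal (surv S f M t Y)))"
        by (simp add: sum.swap[of _ "{..<n}"] sum_distrib_left)
      also have "\<dots> \<le> 1 + (\<Sum>Y\<in>S_non S f. ennreal (M X Y) * d Y)"
        using Suc.IH by (intro add_mono sum_mono mult_left_mono) auto
      also have "\<dots> \<le> d X"
        using super X by auto
      finally show "(\<Sum>t<Suc n. ennreal (surv S f M t X)) \<le> d X" .
    qed
  qed
  then show ?thesis
    using X by (simp add: hit_time_def suminf_eq_SUP SUP_least)
qed

lemma enn2real_hit_time_step:
  assumes nonneg: "\<forall>X\<in>S. \<forall>Y\<in>S. 0 \<le> M X Y"
    and finite_hit: "\<forall>Y\<in>S. hit_time S f M Y < \<infinity>" and X: "X \<in> S_non S f"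
  shows "enn2real (hit_time S f M X)
    = 1 + (\<Sum>Y\<in>S_non S f. M X Y * enn2real (hit_time S f M Y))"
proof -
  have in_S: "Y \<in> S" if "Y \<in> S_non S f" for Y
    using that S_non_subset by blast
  have "hit_time S f M X
      = 1 + (\<Sum>Y\<in>S_non S f. ennreal (M X Y) * ennreal (enn2real (hit_time S f M Y)))"
    using hit_time_step[OF nonneg X] finite_hit in_S by simp
  also have "\<dots> = ennreal (1 + (\<Sum>Y\<in>S_non S f. M X Y * enn2real (hit_time S f M Y)))"
    using nonneg X in_S by (intro one_plus_sum_ennreal_mult) auto
  finally show ?thesis
    using nonneg X in_S by (simp add: enn2real_plus sum_nonneg)
qed

text \<open>A subharmonic function is bounded by a constant times the survival probabilities; these
  are summable since the hitting time is finite, hence tend to 0.\<close>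

lemma subharmonic_nonpos:
  assumes "finite S" and nonneg: "\<forall>X\<in>S. \<forall>Y\<in>S. 0 \<le> M X Y"
    and sub: "\<forall>X\<in>S_non S f. g X \<le> (\<Sum>Y\<in>S_non S f. M X Y * g Y)"
    and X: "X \<in> S_non S f" and finite_hit: "hit_time S f M X < \<infinity>"
  shows "g X \<le> 0"
proof -
  define C where "C = (\<Sum>Y\<in>S_non S f. max 0 (g Y))"
  have fin: "finite (S_non S f)"
    using \<open>finite S\<close> S_non_subset finite_subset by blast
  have "\<forall>X\<in>S_non S f. g X \<le> C * surv S f M n X" for n
  proof (induction n)
    case 0
    have "g Y \<le> C" if "Y \<in> S_non S f" for Y
      using member_le_sum[of Y "S_non S f" "\<lambda>Y. max 0 (g Y)"] fin that
      by (simp add: C_def)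
    then show ?case by simp
  next
    case (Suc n)
    show ?case
    proof
      fix X assume X: "X \<in> S_non S f"
      have "g X \<le> (\<Sum>Y\<in>S_non S f. M X Y * g Y)"
        using sub X by blast
      also have "\<dots> \<le> (\<Sum>Y\<in>S_non S f. M X Y * (C * surv S f M n Y))"
        using Suc.IH nonneg S_non_subset[of S f] X by (intro sum_mono mult_left_mono) auto
      also have "\<dots> = C * surv S f M (Suc n) X"
        using X by (simp add: sum_distrib_left algebra_simps)
      finally show "g X \<le> C * surv S f M (Suc n) X" .
    qed
  qed
  moreover have "(\<lambda>t. C * surv S f M t X) \<longlonglongrightarrow> 0"
  proof -
    have "summable (\<lambda>t. surv S f M t X)"
      using finite_hit surv_nonneg[OF nonneg]
      by (intro summable_suminf_not_top) (auto simp: hit_time_def)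
    then show ?thesis
      using tendsto_mult_right_zero summable_LIMSEQ_zero by blast
  qed
  ultimately show ?thesis
    using X LIMSEQ_le_const[of _ 0 "g X"] by blast
qed

lemma subsolution_le_hit_time:
  assumes "finite S" and nonneg: "\<forall>X\<in>S. \<forall>Y\<in>S. 0 \<le> M X Y"
    and finite_hit: "\<forall>Y\<in>S. hit_time S f M Y < \<infinity>"
    and sub: "\<forall>X\<in>S_non S f. h X \<le> 1 + (\<Sum>Y\<in>S_non S f. M X Y * h Y)"
    and X: "X \<in> S_non S f"
  shows "h X \<le> enn2real (hit_time S f M X)"
proof -
  define g where "g Y = h Y - enn2real (hit_time S f M Y)" for Y
  have "g X \<le> (\<Sum>Y\<in>S_non S f. M X Y * g Y)" if "X \<in> S_non S f" for X
  proof -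
    have "h X \<le> 1 + (\<Sum>Y\<in>S_non S f. M X Y * h Y)"
      using sub that by blast
    then show ?thesis
      using enn2real_hit_time_step[OF nonneg finite_hit that]
      by (simp add: g_def right_diff_distrib sum_subtractf)
  qed
  then have "g X \<le> 0"
    using subharmonic_nonpos[OF \<open>finite S\<close> nonneg _ X] finite_hit X S_non_subset by blast
  then show ?thesis
    by (simp add: g_def)
qed

lemma mixed_nonneg:
  assumes "\<forall>X\<in>S. 0 \<le> q X \<and> q X \<le> 1"
    and "\<forall>X\<in>S. \<forall>Y\<in>S. 0 \<le> P1 X Y" and "\<forall>X\<in>S. \<forall>Y\<in>S. 0 \<le> P2 X Y"
  shows "\<forall>X\<in>S. \<forall>Y\<in>S. 0 \<le> mixed q P1 P2 X Y"
  using assms by (auto simp: mixed_def intro!: add_nonneg_nonneg mult_nonneg_nonneg)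

lemma sum_mixed:
  "(\<Sum>Y\<in>A. mixed q P1 P2 X Y * g Y)
    = q X * (\<Sum>Y\<in>A. P1 X Y * g Y) + (1 - q X) * (\<Sum>Y\<in>A. P2 X Y * g Y)"
proof -
  have "(\<Sum>Y\<in>A. mixed q P1 P2 X Y * g Y)
      = (\<Sum>Y\<in>A. q X * (P1 X Y * g Y) + (1 - q X) * (P2 X Y * g Y))"
    by (intro sum.cong refl) (simp add: mixed_def algebra_simps)
  then show ?thesis
    by (simp add: sum.distrib sum_distrib_left)
qed

lemma drift_self:
  assumes nonneg: "\<forall>X\<in>S. \<forall>Y\<in>S. 0 \<le> P1 X Y"
    and finite_hit: "\<forall>Y\<in>S. hit_time S f P1 Y < \<infinity>" and X: "X \<in> S_non S f"
  shows "drift S f P1 P1 X = 1"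
  using enn2real_hit_time_step[OF nonneg finite_hit X] by (simp add: drift_def)

lemma hit_time_le_real_supersolution:
  assumes nonneg: "\<forall>X\<in>S. \<forall>Y\<in>S. 0 \<le> M X Y"
    and d_nonneg: "\<forall>Y\<in>S_non S f. 0 \<le> d Y"
    and super: "\<forall>X\<in>S_non S f. 1 + (\<Sum>Y\<in>S_non S f. M X Y * d Y) \<le> d X"
    and X: "X \<in> S_non S f"
  shows "hit_time S f M X \<le> ennreal (d X)"
proof (rule hit_time_le_supersolution[OF nonneg _ X], intro ballI)
  fix X assume X: "X \<in> S_non S f"
  have "1 + (\<Sum>Y\<in>S_non S f. ennreal (M X Y) * ennreal (d Y))
      = ennreal (1 + (\<Sum>Y\<in>S_non S f. M X Y * d Y))"
    using nonneg d_nonneg X S_non_subset[of S f] by (intro one_plus_sum_ennreal_mult) auto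
  also have "\<dots> \<le> ennreal (d X)"
    using super X by (simp add: ennreal_leI)
  finally show "1 + (\<Sum>Y\<in>S_non S f. ennreal (M X Y) * ennreal (d Y)) \<le> ennreal (d X)" .
qed

lemma improving_mixture_if_drift_less:
  assumes nonneg1: "\<forall>X\<in>S. \<forall>Y\<in>S. 0 \<le> P1 X Y" and nonneg2: "\<forall>X\<in>S. \<forall>Y\<in>S. 0 \<le> P2 X Y"
    and finite_hit: "\<forall>X\<in>S. hit_time S f P1 X < \<infinity>"
    and X0: "X0 \<in> S_non S f" and less: "drift S f P1 P1 X0 < drift S f P1 P2 X0"
  shows "\<exists>q. (\<forall>X\<in>S. 0 \<le> q X \<and> q X \<le> 1) \<and>
    (\<forall>X\<in>S. hit_time S f (mixed q P1 P2) X \<le> hit_time S f P1 X) \<and>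
    (\<exists>X\<in>S. hit_time S f (mixed q P1 P2) X < hit_time S f P1 X)"
proof -
  define m where "m Y = enn2real (hit_time S f P1 Y)" for Y
  define q where "q X = (if X = X0 then 0 else 1::real)" for X
  let ?M = "mixed q P1 P2"
  have in_S: "Y \<in> S" if "Y \<in> S_non S f" for Y
    using that S_non_subset by blast
  have hit_P1: "hit_time S f P1 Y = ennreal (m Y)" if "Y \<in> S" for Y
    using finite_hit that by (simp add: m_def)
  have m_nonneg: "0 \<le> m Y" for Y
    by (simp add: m_def)
  have q: "\<forall>X\<in>S. 0 \<le> q X \<and> q X \<le> 1"
    by (simp add: q_def)
  have M: "?M X Y = (if X = X0 then P2 X Y else P1 X Y)" for X Y
    by (simp add: mixed_def q_def)
  have nonneg: "\<forall>X\<in>S. \<forall>Y\<in>S. 0 \<le> ?M X Y"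
    using mixed_nonneg[OF q nonneg1 nonneg2] .
  have m_step: "m X = 1 + (\<Sum>Y\<in>S_non S f. P1 X Y * m Y)" if "X \<in> S_non S f" for X
    using enn2real_hit_time_step[OF nonneg1 finite_hit that] by (simp add: m_def)
  have less': "1 + (\<Sum>Y\<in>S_non S f. P2 X0 Y * m Y) < m X0"
    using less drift_self[OF nonneg1 finite_hit X0] by (simp add: drift_def m_def)
  have super: "\<forall>X\<in>S_non S f. 1 + (\<Sum>Y\<in>S_non S f. ?M X Y * m Y) \<le> m X"
  proof
    fix X assume X: "X \<in> S_non S f"
    show "1 + (\<Sum>Y\<in>S_non S f. ?M X Y * m Y) \<le> m X"
    proof (cases "X = X0")
      case True
      then show ?thesis using less' by (simp add: M)
    next
      case False
      then have "(\<Sum>Y\<in>S_non S f. ?M X Y * m Y) = (\<Sum>Y\<in>S_non S f. P1 X Y * m Y)"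
        by (simp add: M)
      then show ?thesis using m_step[OF X] by linarith
    qed
  qed
  have le: "hit_time S f ?M X \<le> hit_time S f P1 X" if "X \<in> S" for X
  proof (cases "X \<in> S_non S f")
    case True
    then show ?thesis
      using hit_time_le_real_supersolution[OF nonneg _ super True] hit_P1[OF that] m_nonneg
      by simp
  next
    case False
    then show ?thesis by (simp add: hit_time_eq_0)
  qed
  have "hit_time S f ?M X0 = 1 + (\<Sum>Y\<in>S_non S f. ennreal (P2 X0 Y) * hit_time S f ?M Y)"
    using hit_time_step[OF nonneg X0] by (simp add: M[of X0])
  also have "\<dots> \<le> 1 + (\<Sum>Y\<in>S_non S f. ennreal (P2 X0 Y) * ennreal (m Y))"
    using le hit_P1 in_S by (intro add_mono sum_mono mult_left_mono) auto
  also have "\<dots> = ennreal (1 + (\<Sum>Y\<in>S_non S f. P2 X0 Y * m Y))"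
    using nonneg2 X0 in_S m_nonneg by (intro one_plus_sum_ennreal_mult) auto
  also have "\<dots> < ennreal (m X0)"
  proof (rule ennreal_lessI[OF _ less'])
    have "0 \<le> (\<Sum>Y\<in>S_non S f. P2 X0 Y * m Y)"
      using nonneg2 X0 in_S m_nonneg by (auto intro: sum_nonneg)
    then show "0 < m X0"
      using less' by linarith
  qed
  also have "\<dots> = hit_time S f P1 X0"
    using hit_P1 in_S X0 by simp
  finally show ?thesis
    using q le X0 in_S by blast
qed

lemma hit_time_mixed_eq_if_drift_le:
  assumes "finite S"
    and nonneg1: "\<forall>X\<in>S. \<forall>Y\<in>S. 0 \<le> P1 X Y" and nonneg2: "\<forall>X\<in>S. \<forall>Y\<in>S. 0 \<le> P2 X Y"
    and finite_hit: "\<forall>X\<in>S. hit_time S f P1 X < \<infinity>"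
    and drift_le: "\<forall>X\<in>S_non S f. drift S f P1 P2 X \<le> drift S f P1 P1 X"
    and q: "\<forall>X\<in>S. 0 \<le> q X \<and> q X \<le> 1"
    and le: "\<forall>X\<in>S. hit_time S f (mixed q P1 P2) X \<le> hit_time S f P1 X"
    and X: "X \<in> S"
  shows "hit_time S f (mixed q P1 P2) X = hit_time S f P1 X"
proof (cases "X \<in> S_non S f")
  case True
  define m where "m Y = enn2real (hit_time S f P1 Y)" for Y
  let ?M = "mixed q P1 P2"
  have nonneg: "\<forall>X\<in>S. \<forall>Y\<in>S. 0 \<le> ?M X Y"
    using mixed_nonneg[OF q nonneg1 nonneg2] .
  have finite_hit_M: "\<forall>Y\<in>S. hit_time S f ?M Y < \<infinity>"
    using le finite_hit le_less_trans by blast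
  have sub: "m X \<le> 1 + (\<Sum>Y\<in>S_non S f. ?M X Y * m Y)" if X: "X \<in> S_non S f" for X
  proof -
    have step1: "(\<Sum>Y\<in>S_non S f. P1 X Y * m Y) = m X - 1"
      using enn2real_hit_time_step[OF nonneg1 finite_hit X] by (simp add: m_def)
    have step2: "m X - 1 \<le> (\<Sum>Y\<in>S_non S f. P2 X Y * m Y)"
      using drift_le X drift_self[OF nonneg1 finite_hit X] by (auto simp: drift_def m_def)
    have "m X - 1 = q X * (m X - 1) + (1 - q X) * (m X - 1)"
      by (simp add: algebra_simps)
    also have "\<dots> \<le> q X * (m X - 1) + (1 - q X) * (\<Sum>Y\<in>S_non S f. P2 X Y * m Y)"
      using q X S_non_subset[of S f] step2 by (intro add_left_mono mult_left_mono) auto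
    finally show ?thesis
      unfolding sum_mixed step1 by linarith
  qed
  have "m X \<le> enn2real (hit_time S f ?M X)"
    using subsolution_le_hit_time[OF \<open>finite S\<close> nonneg finite_hit_M] sub True by blast
  have "hit_time S f P1 X = ennreal (m X)"
    using finite_hit X by (simp add: m_def)
  also have "\<dots> \<le> ennreal (enn2real (hit_time S f ?M X))"
    by (rule ennreal_leI) fact
  also have "\<dots> = hit_time S f ?M X"
    using finite_hit_M X by simp
  finally have "hit_time S f P1 X \<le> hit_time S f ?M X" .
  then show ?thesis
    using le X by (simp add: order_antisym)
next
  case False
  then show ?thesis by (simp add: hit_time_eq_0)
qed

lemma drift_less_iff_improving_mixture:
  assumes "finite S"
    and nonneg1: "\<forall>X\<in>S. \<forall>Y\<in>S. 0 \<le> P1 X Y" and nonneg2: "\<forall>X\<in>S. \<forall>Y\<in>S. 0 \<le> P2 X Y"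
    and finite_hit: "\<forall>X\<in>S. hit_time S f P1 X < \<infinity>"
  shows "(\<exists>X\<in>S_non S f. drift S f P1 P1 X < drift S f P1 P2 X) \<longleftrightarrow>
    (\<exists>q. (\<forall>X\<in>S. 0 \<le> q X \<and> q X \<le> 1) \<and>
      (\<forall>X\<in>S. hit_time S f (mixed q P1 P2) X \<le> hit_time S f P1 X) \<and>
      (\<exists>X\<in>S. hit_time S f (mixed q P1 P2) X < hit_time S f P1 X))"
proof
  assume "\<exists>X\<in>S_non S f. drift S f P1 P1 X < drift S f P1 P2 X"
  then show "\<exists>q. (\<forall>X\<in>S. 0 \<le> q X \<and> q X \<le> 1) \<and>
      (\<forall>X\<in>S. hit_time S f (mixed q P1 P2) X \<le> hit_time S f P1 X) \<and>
      (\<exists>X\<in>S. hit_time S f (mixed q P1 P2) X < hit_time S f P1 X)"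
    using improving_mixture_if_drift_less[OF nonneg1 nonneg2 finite_hit] by blast
next
  assume "\<exists>q. (\<forall>X\<in>S. 0 \<le> q X \<and> q X \<le> 1) \<and>
      (\<forall>X\<in>S. hit_time S f (mixed q P1 P2) X \<le> hit_time S f P1 X) \<and>
      (\<exists>X\<in>S. hit_time S f (mixed q P1 P2) X < hit_time S f P1 X)"
  then obtain q X where q: "\<forall>X\<in>S. 0 \<le> q X \<and> q X \<le> 1"
    and le: "\<forall>X\<in>S. hit_time S f (mixed q P1 P2) X \<le> hit_time S f P1 X"
    and X: "X \<in> S" and less: "hit_time S f (mixed q P1 P2) X < hit_time S f P1 X"
    by blast
  show "\<exists>X\<in>S_non S f. drift S f P1 P1 X < drift S f P1 P2 X"
  proof (rule ccontr)
    assume "\<not> ?thesis"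
    then have "\<forall>X\<in>S_non S f. drift S f P1 P2 X \<le> drift S f P1 P1 X"
      by (auto simp: not_less)
    then have "hit_time S f (mixed q P1 P2) X = hit_time S f P1 X"
      using hit_time_mixed_eq_if_drift_le[OF \<open>finite S\<close> nonneg1 nonneg2 finite_hit _ q le X] by blast
    then show False
      using less by simp
  qed
qed

lemma runtime_le_runtime_iff:
  "N > 0 \<Longrightarrow> runtime N S f P X \<le> runtime N S f P' X \<longleftrightarrow> hit_time S f P X \<le> hit_time S f P' X"
  by (simp add: runtime_def ennreal_mult_le_mult_iff)

lemma runtime_less_runtime_iff:
  assumes "N > 0"
  shows "runtime N S f P X < runtime N S f P' X \<longleftrightarrow> hit_time S f P X < hit_time S f P' X"
  using runtime_le_runtime_iff[OF assms, of S f P' X P] by (simp only: not_le[symmetric])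

theorem mainTheorem1:
  fixes S :: "'x::finite multiset set" and f :: "'x \<Rightarrow> real"
    and P1 P2 :: "'x multiset \<Rightarrow> 'x multiset \<Rightarrow> real" and N :: nat
  assumes "finite S"
    and "pure_strategy S f P1" and "pure_strategy S f P2"
    and "\<forall>X\<in>S. hit_time S f P1 X < \<infinity>"
    and "N > 0"
  shows "((\<exists>X\<in>S_non S f. drift S f P1 P1 X < drift S f P1 P2 X) \<longleftrightarrow>
          (\<exists>q. (\<forall>X\<in>S. 0 \<le> q X \<and> q X \<le> 1) \<and>
               (\<forall>X\<in>S. hit_time S f (mixed q P1 P2) X \<le> hit_time S f P1 X) \<and>
               (\<exists>X\<in>S. hit_time S f (mixed q P1 P2) X < hit_time S f P1 X)))
       \<and> ((\<exists>X\<in>S_non S f. drift S f P1 P1 X < drift S f P1 P2 X) \<longleftrightarrow>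
          (\<exists>q. (\<forall>X\<in>S. 0 \<le> q X \<and> q X \<le> 1) \<and>
               (\<forall>X\<in>S. runtime N S f (mixed q P1 P2) X \<le> runtime N S f P1 X) \<and>
               (\<exists>X\<in>S. runtime N S f (mixed q P1 P2) X < runtime N S f P1 X)))"
proof -
  have nonneg1: "\<forall>X\<in>S. \<forall>Y\<in>S. 0 \<le> P1 X Y" and nonneg2: "\<forall>X\<in>S. \<forall>Y\<in>S. 0 \<le> P2 X Y"
    using assms(2,3) by (auto simp: pure_strategy_def)
  note hit_time_iff = drift_less_iff_improving_mixture[OF assms(1) nonneg1 nonneg2 assms(4)]
  show ?thesis
    unfolding runtime_le_runtime_iff[OF assms(5)] runtime_less_runtime_iff[OF assms(5)]
    using hit_time_iff hit_time_iff by (rule conjI)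
qed

end
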